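(* Let $p\ge 2$, let $\mathcal{N}$ be a finite nonempty index set, let $\{\hat{\bm{\Sigma}}(t_i)\}_{i\in\mathcal{N}}$ be $p\times p$ symmetric positive semidefinite matrices, and let $\lambda>0$. For a tuple $\mathbb{\Omega}=\{\bm{\Omega}(t_i)\}_{i\in\mathcal{N}}$ of $p\times p$ symmetric positive definite matrices define $$L(\mathbb{\Omega})=\frac{1}{\sqrt{|\mathcal{N}|}}\sum_{i\in\mathcal{N}}\Big[\operatorname{tr}\big(\bm{\Omega}(t_i)\hat{\bm{\Sigma}}(t_i)\big)-\log\det\bm{\Omega}(t_i)\Big]+\lambda\sum_{u\neq v}\sqrt{\sum_{i\in\mathcal{N}}\Omega_{uv}(t_i)^2},$$ where $\Omega_{uv}(t_i)$ denotes the $(u,v)$ entry of $\bm{\Omega}(t_i)$. Suppose the minimizer $\{\hat{\bm{\Omega}}(t_i)\}_{i\in\mathcal{N}}$ of $L$ over tuples of positive definite matrices has, after a common permutation of the $p$ variables, the block-diagonal form $$\hat{\bm{\Omega}}(t_i)=\begin{pmatrix}\hat{\bm{\Omega}}_1(t_i)&\bm{0}\\ \bm{0}&\hat{\bm{\Omega}}_2(t_i)\end{pmatrix},\qquad i\in\mathcal{N},$$ where all $\hat{\bm{\Omega}}_1(t_i)$ have the same dimension, corresponding to a set $G_1$ of variables, and the $\hat{\bm{\Omega}}_2(t_i)$ correspond to the complementary set $G_2$. Then $\{\hat{\bm{\Omega}}_1(t_i)\}_{i\in\mathcal{N}}$ minimizes the objective of the same form as $L$ (same $\mathcal{N}$,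 same $\lambda$) in which each $\hat{\bm{\Sigma}}(t_i)$ is replaced by its principal submatrix on the variables in $G_1$, and likewise $\{\hat{\bm{\Omega}}_2(t_i)\}_{i\in\mathcal{N}}$ minimizes the analogous objective on the variables in $G_2$.
   Context: In the paper, $\mathcal{N}=\mathcal{N}_{k,d}=\{i:|t_i-t_k|\le d\}$ is the set of indices of observation times $0\le t_1\le\dots\le t_N\le 1$ within distance $d$ of $t_k$, and $\hat{\bm{\Sigma}}(t)=\sum_{j=1}^N \omega_h^{t_j}(t)\bm{x}_j\bm{x}_j^T$ is a kernel estimate of the covariance matrix, with weights $\omega_h^{t_j}(t)=K((t_j-t)/h)/\sum_{j'}K((t_{j'}-t)/h)$ for a symmetric nonnegative kernel $K$ and bandwidth $h>0$, based on observations $\bm{x}_j\in\mathbb{R}^p$. The objective $L$ is strictly convex, so its minimizer, when it exists, is unique. *)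

theory Defs
  imports "HOL-Analysis.Analysis"
begin

text \<open>Matrices are represented as functions nat => nat => real; a matrix "on the
variable set G" only uses its entries indexed by G x G. Principal submatrices on
a subset G1 of the variables are thus obtained simply by reading the same function on G1.\<close>

definition sym_on :: "nat set \<Rightarrow> (nat \<Rightarrow> nat \<Rightarrow> real) \<Rightarrow> bool" where
  "sym_on G A \<longleftrightarrow> (\<forall>u\<in>G. \<forall>v\<in>G. A u v = A v u)"

definition quad_on :: "nat set \<Rightarrow> (nat \<Rightarrow> nat \<Rightarrow> real) \<Rightarrow> (nat \<Rightarrow> real) \<Rightarrow> real" where
  "quad_on G A x = (\<Sum>u\<in>G. \<Sum>v\<in>G. x u * A u v * x v)"

definition psd_on :: "nat set \<Rightarrow> (nat \<Rightarrow> nat \<Rightarrow> real) \<Rightarrow> bool" where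
  "psd_on G A \<longleftrightarrow> sym_on G A \<and> (\<forall>x. quad_on G A x \<ge> 0)"

definition pd_on :: "nat set \<Rightarrow> (nat \<Rightarrow> nat \<Rightarrow> real) \<Rightarrow> bool" where
  "pd_on G A \<longleftrightarrow> sym_on G A \<and> (\<forall>x. (\<exists>u\<in>G. x u \<noteq> 0) \<longrightarrow> quad_on G A x > 0)"

definition det_on :: "nat set \<Rightarrow> (nat \<Rightarrow> nat \<Rightarrow> real) \<Rightarrow> real" where
  "det_on G A = (\<Sum>\<pi> \<in> {\<pi>. \<pi> permutes G}. of_int (sign \<pi>) * (\<Prod>u\<in>G. A u (\<pi> u)))"

definition tr_prod_on :: "nat set \<Rightarrow> (nat \<Rightarrow> nat \<Rightarrow> real) \<Rightarrow> (nat \<Rightarrow> nat \<Rightarrow> real) \<Rightarrow> real" where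
  "tr_prod_on G A B = (\<Sum>u\<in>G. \<Sum>v\<in>G. A u v * B v u)"

definition objL :: "nat set \<Rightarrow> 'i set \<Rightarrow> ('i \<Rightarrow> nat \<Rightarrow> nat \<Rightarrow> real) \<Rightarrow> real
    \<Rightarrow> ('i \<Rightarrow> nat \<Rightarrow> nat \<Rightarrow> real) \<Rightarrow> real" where
  "objL G N S lam \<Omega> =
     (1 / sqrt (real (card N))) * (\<Sum>i\<in>N. tr_prod_on G (\<Omega> i) (S i) - ln (det_on G (\<Omega> i)))
     + lam * (\<Sum>(u,v) \<in> {(u,v). u \<in> G \<and> v \<in> G \<and> u \<noteq> v}. sqrt (\<Sum>i\<in>N. (\<Omega> i u v)^2))"

definition feasible :: "nat set \<Rightarrow> 'i set \<Rightarrow> ('i \<Rightarrow> nat \<Rightarrow> nat \<Rightarrow> real) \<Rightarrow> bool" where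
  "feasible G N \<Omega> \<longleftrightarrow> (\<forall>i\<in>N. pd_on G (\<Omega> i))"

definition is_minimizer :: "nat set \<Rightarrow> 'i set \<Rightarrow> ('i \<Rightarrow> nat \<Rightarrow> nat \<Rightarrow> real) \<Rightarrow> real
    \<Rightarrow> ('i \<Rightarrow> nat \<Rightarrow> nat \<Rightarrow> real) \<Rightarrow> bool" where
  "is_minimizer G N S lam \<Omega> \<longleftrightarrow> feasible G N \<Omega> \<and>
     (\<forall>\<Omega>'. feasible G N \<Omega>' \<longrightarrow> objL G N S lam \<Omega> \<le> objL G N S lam \<Omega>')"

end

theory Submission
  imports Defs "Jordan_Normal_Form.Determinant"
begin

text \<open>For a tuple of matrices that is block diagonal with respect to G1, G2, the objective
splits into the objectives on G1 and on G2: the trace terms and the penalty separate because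
the cross entries vanish, and log det separates because the determinant of a block-diagonal
matrix is the product of the block determinants, which are positive for positive definite
blocks. So if some tuple on G1 beat the G1-block of the minimizer, gluing it to the G2-block
of the minimizer would give a positive definite tuple on all variables with a smaller
objective.\<close>

definition block_diag :: "nat set \<Rightarrow> nat set \<Rightarrow> (nat \<Rightarrow> nat \<Rightarrow> real) \<Rightarrow> bool" where
  "block_diag G1 G2 A \<longleftrightarrow> (\<forall>u\<in>G1. \<forall>v\<in>G2. A u v = 0 \<and> A v u = 0)"

lemma block_diag_commute: "block_diag G1 G2 A \<longleftrightarrow> block_diag G2 G1 A"
  unfolding block_diag_def by blast

definition glue_blocks :: "nat set \<Rightarrow> (nat \<Rightarrow> nat \<Rightarrow> real) \<Rightarrow> nat set \<Rightarrow> (nat \<Rightarrow> nat \<Rightarrow> real)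
    \<Rightarrow> nat \<Rightarrow> nat \<Rightarrow> real" where
  "glue_blocks G1 A G2 B u v =
     (if u \<in> G1 \<and> v \<in> G1 then A u v else if u \<in> G2 \<and> v \<in> G2 then B u v else 0)"

lemma block_diag_glue_blocks: "G1 \<inter> G2 = {} \<Longrightarrow> block_diag G1 G2 (glue_blocks G1 A G2 B)"
  unfolding block_diag_def glue_blocks_def by auto

lemma glue_blocks_left: "\<forall>u\<in>G1. \<forall>v\<in>G1. glue_blocks G1 A G2 B u v = A u v"
  unfolding glue_blocks_def by simp

lemma glue_blocks_right: "G1 \<inter> G2 = {} \<Longrightarrow> \<forall>u\<in>G2. \<forall>v\<in>G2. glue_blocks G1 A G2 B u v = B u v"
  unfolding glue_blocks_def by auto

definition kron_delta :: "nat \<Rightarrow> nat \<Rightarrow> real" where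
  "kron_delta u v = (if u = v then 1 else 0)"

lemma double_sum_block_diag:
  fixes f :: "nat \<Rightarrow> nat \<Rightarrow> real"
  assumes "finite G1" "finite G2" "G1 \<inter> G2 = {}"
    and "\<And>u v. u \<in> G1 \<Longrightarrow> v \<in> G2 \<Longrightarrow> f u v = 0 \<and> f v u = 0"
  shows "(\<Sum>u\<in>G1 \<union> G2. \<Sum>v\<in>G1 \<union> G2. f u v) =
           (\<Sum>u\<in>G1. \<Sum>v\<in>G1. f u v) + (\<Sum>u\<in>G2. \<Sum>v\<in>G2. f u v)"
  using assms by (simp add: sum.union_disjoint sum.distrib)

lemma quad_on_block_diag:
  assumes "finite G1" "finite G2" "G1 \<inter> G2 = {}" "block_diag G1 G2 A"
  shows "quad_on (G1 \<union> G2) A x = quad_on G1 A x + quad_on G2 A x"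
  unfolding quad_on_def using assms by (intro double_sum_block_diag) (auto simp: block_diag_def)

lemma tr_prod_on_block_diag:
  assumes "finite G1" "finite G2" "G1 \<inter> G2 = {}" "block_diag G1 G2 A"
  shows "tr_prod_on (G1 \<union> G2) A B = tr_prod_on G1 A B + tr_prod_on G2 A B"
  unfolding tr_prod_on_def using assms by (intro double_sum_block_diag) (auto simp: block_diag_def)

lemma quad_on_lincomb:
  "quad_on G (\<lambda>u v. a * A u v + b * B u v) x = a * quad_on G A x + b * quad_on G B x"
  unfolding quad_on_def by (simp add: algebra_simps sum.distrib sum_distrib_left)

lemma quad_on_kron_delta:
  assumes "finite G"
  shows "quad_on G kron_delta x = (\<Sum>u\<in>G. (x u)\<^sup>2)"
proof -
  have "x u * kron_delta u v * x v = (if v = u then (x u)\<^sup>2 else 0)" for u v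
    by (simp add: kron_delta_def power2_eq_square)
  with assms show ?thesis by (simp add: quad_on_def)
qed

lemma pd_on_cong:
  assumes "\<forall>u\<in>G. \<forall>v\<in>G. A u v = B u v"
  shows "pd_on G A \<longleftrightarrow> pd_on G B"
proof -
  have "quad_on G A x = quad_on G B x" for x
    unfolding quad_on_def using assms by (intro sum.cong refl) auto
  moreover have "sym_on G A \<longleftrightarrow> sym_on G B"
    unfolding sym_on_def using assms by auto
  ultimately show ?thesis unfolding pd_on_def by simp
qed

lemma pd_on_quad_on_nonneg: "pd_on G A \<Longrightarrow> quad_on G A x \<ge> 0"
  unfolding pd_on_def quad_on_def by (cases "\<exists>u\<in>G. x u \<noteq> 0") (auto intro: less_imp_le)

lemma pd_on_kron_delta: "finite G \<Longrightarrow> pd_on G kron_delta"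
  unfolding pd_on_def sym_on_def
  by (auto simp: quad_on_kron_delta kron_delta_def intro!: sum_pos2)

lemma pd_on_convex_comb:
  assumes "pd_on G A" "pd_on G B" "0 \<le> t" "t \<le> 1"
  shows "pd_on G (\<lambda>u v. t * A u v + (1 - t) * B u v)"
  unfolding pd_on_def
proof (intro conjI allI impI)
  show "sym_on G (\<lambda>u v. t * A u v + (1 - t) * B u v)"
    using assms(1,2) unfolding pd_on_def sym_on_def by simp
next
  fix x :: "nat \<Rightarrow> real" assume "\<exists>u\<in>G. x u \<noteq> 0"
  then have "quad_on G A x > 0" "quad_on G B x > 0"
    using assms(1,2) unfolding pd_on_def by auto
  with assms(3,4) show "quad_on G (\<lambda>u v. t * A u v + (1 - t) * B u v) x > 0"
    unfolding quad_on_lincomb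
    by (cases "t = 0") (auto intro: add_pos_nonneg)
qed

lemma pd_on_subset:
  assumes "finite G" "H \<subseteq> G" "pd_on G A"
  shows "pd_on H A"
  unfolding pd_on_def
proof (intro conjI allI impI)
  show "sym_on H A" using assms unfolding pd_on_def sym_on_def by blast
next
  fix x :: "nat \<Rightarrow> real" assume x: "\<exists>u\<in>H. x u \<noteq> 0"
  define y where "y u = (if u \<in> H then x u else 0)" for u
  have "quad_on G A y = quad_on H A x"
    unfolding quad_on_def using assms(1,2)
    by (intro sum.mono_neutral_cong_right) (auto simp: y_def intro!: sum.mono_neutral_cong_right)
  moreover have "\<exists>u\<in>G. y u \<noteq> 0" using x assms(2) by (auto simp: y_def)
  ultimately show "quad_on H A x > 0" using assms(3) unfolding pd_on_def by auto
qed

lemma pd_on_block_diag: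
  assumes "finite G1" "finite G2" "G1 \<inter> G2 = {}" "block_diag G1 G2 A"
    and "pd_on G1 A" "pd_on G2 A"
  shows "pd_on (G1 \<union> G2) A"
  unfolding pd_on_def
proof (intro conjI allI impI)
  show "sym_on (G1 \<union> G2) A" using assms(4-6) unfolding pd_on_def sym_on_def block_diag_def by auto
next
  fix x :: "nat \<Rightarrow> real" assume "\<exists>u\<in>G1 \<union> G2. x u \<noteq> 0"
  then have "quad_on G1 A x > 0 \<or> quad_on G2 A x > 0"
    using assms(5,6) unfolding pd_on_def by blast
  moreover have "quad_on G1 A x \<ge> 0" "quad_on G2 A x \<ge> 0"
    using assms(5,6) by (simp_all add: pd_on_quad_on_nonneg)
  ultimately show "quad_on (G1 \<union> G2) A x > 0"
    unfolding quad_on_block_diag[OF assms(1-4)] by linarith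
qed

lemma det_on_cong:
  assumes "\<forall>u\<in>G. \<forall>v\<in>G. A u v = B u v"
  shows "det_on G A = det_on G B"
  unfolding det_on_def
proof (intro sum.cong refl arg_cong2[where f = "(*)"] prod.cong)
  fix \<pi> u assume "\<pi> \<in> {\<pi>. \<pi> permutes G}" "u \<in> G"
  then show "A u (\<pi> u) = B u (\<pi> u)" using assms by (simp add: permutes_in_image)
qed

lemma det_on_kron_delta:
  assumes "finite G"
  shows "det_on G kron_delta = 1"
proof -
  have "of_int (sign \<pi>) * (\<Prod>u\<in>G. kron_delta u (\<pi> u)) = (if \<pi> = id then 1 else 0)"
    if "\<pi> permutes G" for \<pi>
  proof (cases "\<pi> = id")
    case False
    then obtain u where "\<pi> u \<noteq> u" by (auto simp: fun_eq_iff)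
    moreover from this have "u \<in> G" using that by (meson permutes_not_in)
    ultimately show ?thesis using assms by (auto simp: kron_delta_def intro!: prod_zero)
  qed (simp add: kron_delta_def)
  then have "det_on G kron_delta = (\<Sum>\<pi>\<in>{\<pi>. \<pi> permutes G}. if \<pi> = id then 1 else 0)"
    unfolding det_on_def by (intro sum.cong) auto
  also have "\<dots> = 1"
    using assms permutes_id[of G] by (simp add: finite_permutations)
  finally show ?thesis .
qed

lemma det_on_eq_det_mat: "det_on {0..<n} B = det (mat n n (\<lambda>(i, j). B i j))"
  unfolding det_on_def by (subst det_def'[of _ n]) (auto intro!: sum.cong prod.cong)

lemma pd_on_interval_det_on_nonzero:
  assumes "pd_on {0..<n} B"
  shows "det_on {0..<n} B \<noteq> 0"
proof
  let ?M = "mat n n (\<lambda>(i, j). B i j)"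
  assume "det_on {0..<n} B = 0"
  then obtain v where v: "v \<in> carrier_vec n" "v \<noteq> 0\<^sub>v n" "?M *\<^sub>v v = 0\<^sub>v n"
    using det_0_iff_vec_prod_zero[of ?M n] by (auto simp: det_on_eq_det_mat)
  have Mv: "(\<Sum>j\<in>{0..<n}. B i j * v $ j) = 0" if "i < n" for i
  proof -
    have "(?M *\<^sub>v v) $ i = 0" using v(3) that by simp
    then show ?thesis using that v(1) by (simp add: scalar_prod_def)
  qed
  have "\<exists>u\<in>{0..<n}. v $ u \<noteq> 0"
  proof (rule ccontr)
    assume "\<not> ?thesis"
    then have "v = 0\<^sub>v n" using v(1) by (intro eq_vecI) auto
    then show False using v(2) by simp
  qed
  then have "quad_on {0..<n} B (\<lambda>u. v $ u) > 0" using assms unfolding pd_on_def by auto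
  moreover have "quad_on {0..<n} B (\<lambda>u. v $ u) = 0"
    unfolding quad_on_def by (simp add: mult.assoc Mv flip: sum_distrib_left)
  ultimately show False by simp
qed

lemma pd_on_interval_det_on_pos:
  assumes "pd_on {0..<n} B"
  shows "det_on {0..<n} B > 0"
proof (rule ccontr)
  \<comment> \<open>The segment from the identity to B stays positive definite, so its determinant never
    vanishes and, by the intermediate value theorem, keeps the sign of det I = 1.\<close>
  define f where "f t = det_on {0..<n} (\<lambda>u v. t * B u v + (1 - t) * kron_delta u v)" for t
  have nonzero: "f t \<noteq> 0" if "0 \<le> t" "t \<le> 1" for t
    unfolding f_def using that assms pd_on_kron_delta[of "{0..<n}"]
    by (intro pd_on_interval_det_on_nonzero pd_on_convex_comb) auto
  have "f 0 = 1" by (simp add: f_def det_on_kron_delta)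
  moreover have "continuous_on {0..1} f"
    unfolding f_def det_on_def by (intro continuous_intros)
  moreover assume "\<not> det_on {0..<n} B > 0"
  then have "f 1 \<le> 0" by (simp add: f_def)
  ultimately obtain t where "0 \<le> t" "t \<le> 1" "f t = 0"
    using IVT2'[of f 1 0 0] by auto
  with nonzero show False by blast
qed

lemma compose_permutes_disjoint_apply:
  assumes "a permutes G1" "b permutes G2" "G1 \<inter> G2 = {}"
  shows "x \<in> G1 \<Longrightarrow> (a \<circ> b) x = a x" "x \<in> G2 \<Longrightarrow> (a \<circ> b) x = b x"
proof -
  assume "x \<in> G1"
  with assms(3) have "x \<notin> G2" by blast
  with assms(2) show "(a \<circ> b) x = a x" by (simp add: permutes_not_in)
next
  assume "x \<in> G2"
  with assms(2,3) have "b x \<notin> G1" by (auto simp: permutes_in_image)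
  with assms(1) show "(a \<circ> b) x = b x" by (simp add: permutes_not_in)
qed

definition restrict_perm :: "'a set \<Rightarrow> ('a \<Rightarrow> 'a) \<Rightarrow> 'a \<Rightarrow> 'a" where
  "restrict_perm A \<pi> x = (if x \<in> A then \<pi> x else x)"

lemma restrict_perm_permutes:
  assumes "inj \<pi>" "\<pi> ` A = A"
  shows "restrict_perm A \<pi> permutes A"
proof (rule bij_imp_permutes)
  have "bij_betw \<pi> A A" using assms by (simp add: bij_betw_def inj_on_subset[OF assms(1)])
  then show "bij_betw (restrict_perm A \<pi>) A A"
    by (rule bij_betw_cong[THEN iffD1, rotated]) (simp add: restrict_perm_def)
qed (simp add: restrict_perm_def)

lemma permutes_block_invariant:
  assumes "\<pi> permutes G1 \<union> G2" "finite G1" "G1 \<inter> G2 = {}" "\<pi> ` G1 \<subseteq> G1"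
  shows "\<pi> ` G1 = G1" "\<pi> ` G2 = G2"
proof -
  have inj: "inj \<pi>" using assms(1) by (rule permutes_inj)
  show G1: "\<pi> ` G1 = G1" using assms(2,4) inj by (intro endo_inj_surj) (auto intro: inj_on_subset)
  have "\<pi> ` (G1 \<union> G2) = G1 \<union> G2" using assms(1) by (rule permutes_image)
  then have "\<pi> ` G2 = (G1 \<union> G2) - \<pi> ` G1"
    using inj assms(3) by (auto simp: image_Un dest: injD)
  with G1 assms(3) show "\<pi> ` G2 = G2" by auto
qed

lemma bij_betw_compose_permutes:
  assumes "finite G1" "G1 \<inter> G2 = {}"
  shows "bij_betw (\<lambda>(a, b). a \<circ> b) ({a. a permutes G1} \<times> {b. b permutes G2})
           {\<pi>. \<pi> permutes G1 \<union> G2 \<and> \<pi> ` G1 \<subseteq> G1}"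
    (is "bij_betw ?c ?P ?Q")
proof -
  let ?r = "\<lambda>\<pi>. (restrict_perm G1 \<pi>, restrict_perm G2 \<pi>)"
  have "?r (?c ab) = ab \<and> ?c ab \<in> ?Q" if "ab \<in> ?P" for ab
  proof
    obtain a b where ab: "ab = (a, b)" "a permutes G1" "b permutes G2" using \<open>ab \<in> ?P\<close> by auto
    note ab_apply = compose_permutes_disjoint_apply[OF ab(2,3) assms(2)]
    then show "?r (?c ab) = ab"
      using ab by (auto simp: restrict_perm_def fun_eq_iff permutes_not_in)
    have "a \<circ> b permutes G1 \<union> G2"
      using ab by (intro permutes_compose) (auto intro: permutes_subset)
    moreover have "(a \<circ> b) ` G1 \<subseteq> G1"
      using ab_apply(1) ab(2) by (auto simp: permutes_in_image)
    ultimately show "?c ab \<in> ?Q" using ab(1) by simp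
  qed
  moreover have "?r \<pi> \<in> ?P \<and> ?c (?r \<pi>) = \<pi>" if "\<pi> \<in> ?Q" for \<pi>
  proof
    from that have \<pi>: "\<pi> permutes G1 \<union> G2" "\<pi> ` G1 \<subseteq> G1" by auto
    note inv = permutes_block_invariant[OF \<pi>(1) assms \<pi>(2)]
    have "inj \<pi>" using \<pi>(1) by (rule permutes_inj)
    with inv show "?r \<pi> \<in> ?P" by (simp add: restrict_perm_permutes)
    have "\<pi> x \<in> G2" if "x \<in> G2" for x using inv(2) that by blast
    with assms(2) show "?c (?r \<pi>) = \<pi>"
      using permutes_not_in[OF \<pi>(1)] by (auto simp: fun_eq_iff restrict_perm_def)
  qed
  ultimately show ?thesis
    by (intro bij_betw_byWitness[where f' = ?r]) blast+
qed

lemma det_on_block_diag: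
  assumes "finite G1" "finite G2" "G1 \<inter> G2 = {}" "block_diag G1 G2 C"
  shows "det_on (G1 \<union> G2) C = det_on G1 C * det_on G2 C"
proof -
  let ?g = "\<lambda>G \<pi>. of_int (sign \<pi>) * (\<Prod>u\<in>G. C u (\<pi> u))"
  let ?P = "{a. a permutes G1} \<times> {b. b permutes G2}"
  let ?Q = "{\<pi>. \<pi> permutes G1 \<union> G2 \<and> \<pi> ` G1 \<subseteq> G1}"
  have "?g (G1 \<union> G2) \<pi> = 0" if \<pi>: "\<pi> permutes G1 \<union> G2" "\<not> \<pi> ` G1 \<subseteq> G1" for \<pi>
  proof -
    obtain u where "u \<in> G1" "\<pi> u \<notin> G1" using \<pi>(2) by auto
    moreover have "\<pi> u \<in> G1 \<union> G2" using \<open>u \<in> G1\<close> \<pi>(1) by (simp only: permutes_in_image) blast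
    ultimately have "C u (\<pi> u) = 0" using assms(4) by (auto simp: block_diag_def)
    with \<open>u \<in> G1\<close> assms(1,2) show ?thesis by (auto intro!: prod_zero)
  qed
  then have "det_on (G1 \<union> G2) C = sum (?g (G1 \<union> G2)) ?Q"
    unfolding det_on_def using assms(1,2)
    by (intro sum.mono_neutral_right) (auto simp: finite_permutations)
  also have "\<dots> = (\<Sum>(a, b)\<in>?P. ?g (G1 \<union> G2) (a \<circ> b))"
    unfolding sum.reindex_bij_betw[OF bij_betw_compose_permutes[OF assms(1,3)], symmetric]
    by (intro sum.cong) auto
  also have "\<dots> = (\<Sum>(a, b)\<in>?P. ?g G1 a * ?g G2 b)"
  proof (intro sum.cong refl, clarify)
    fix a b assume ab: "a permutes G1" "b permutes G2"
    have "sign (a \<circ> b) = sign a * sign b"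
      using ab assms(1,2) by (intro sign_compose) (auto simp: permutation_permutes)
    moreover have "(\<Prod>u\<in>G1 \<union> G2. C u ((a \<circ> b) u)) =
        (\<Prod>u\<in>G1. C u (a u)) * (\<Prod>u\<in>G2. C u (b u))"
      using compose_permutes_disjoint_apply[OF ab assms(3)] assms(1-3)
      by (simp add: prod.union_disjoint cong: prod.cong)
    ultimately show "?g (G1 \<union> G2) (a \<circ> b) = ?g G1 a * ?g G2 b" by simp
  qed
  also have "\<dots> = det_on G1 C * det_on G2 C"
    unfolding det_on_def sum_product sum.cartesian_product by (simp add: case_prod_unfold)
  finally show ?thesis .
qed

lemma pd_on_det_on_pos:
  assumes "finite G" "pd_on G A"
  shows "det_on G A > 0"
proof -
  \<comment> \<open>Padding A with an identity block reduces to an index set {0..<n}, where the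
    determinant of Jordan_Normal_Form is available.\<close>
  obtain n where "G \<subseteq> {0..<n}" using assms(1) finite_nat_bounded by (auto simp: subset_eq)
  define K where "K = {0..<n} - G"
  define X where "X = glue_blocks G A K kron_delta"
  have un: "G \<union> K = {0..<n}" and dis: "G \<inter> K = {}" and fin: "finite K"
    using \<open>G \<subseteq> {0..<n}\<close> by (auto simp: K_def)
  have blk: "block_diag G K X" unfolding X_def using dis by (rule block_diag_glue_blocks)
  have XG: "\<forall>u\<in>G. \<forall>v\<in>G. X u v = A u v" and XK: "\<forall>u\<in>K. \<forall>v\<in>K. X u v = kron_delta u v"
    unfolding X_def using dis by (simp_all add: glue_blocks_left glue_blocks_right)
  have "pd_on G X" "pd_on K X"
    using assms(2) pd_on_kron_delta[OF fin] by (simp_all add: pd_on_cong[OF XG] pd_on_cong[OF XK])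
  then have "pd_on {0..<n} X"
    using pd_on_block_diag[OF assms(1) fin dis blk] un by simp
  then have "det_on {0..<n} X > 0" by (rule pd_on_interval_det_on_pos)
  also have "det_on {0..<n} X = det_on G A"
    using det_on_block_diag[OF assms(1) fin dis blk] un
    by (simp add: det_on_cong[OF XG] det_on_cong[OF XK] det_on_kron_delta[OF fin])
  finally show ?thesis .
qed

lemma objL_cong:
  assumes "\<forall>i\<in>N. \<forall>u\<in>G. \<forall>v\<in>G. X i u v = Y i u v"
  shows "objL G N S lam X = objL G N S lam Y"
proof -
  have "tr_prod_on G (X i) (S i) = tr_prod_on G (Y i) (S i)" if "i \<in> N" for i
    unfolding tr_prod_on_def using assms that by (intro sum.cong refl) auto
  moreover have "det_on G (X i) = det_on G (Y i)" if "i \<in> N" for i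
    using assms that by (intro det_on_cong) auto
  moreover have "(\<Sum>i\<in>N. (X i u v)\<^sup>2) = (\<Sum>i\<in>N. (Y i u v)\<^sup>2)" if "u \<in> G" "v \<in> G" for u v
    using assms that by (intro sum.cong) auto
  ultimately show ?thesis unfolding objL_def
    by (intro arg_cong2[where f = "(+)"] arg_cong2[where f = "(*)"] refl sum.cong) auto
qed

lemma objL_block_diag:
  assumes "finite G1" "finite G2" "G1 \<inter> G2 = {}"
    and "\<forall>i\<in>N. block_diag G1 G2 (X i) \<and> pd_on G1 (X i) \<and> pd_on G2 (X i)"
  shows "objL (G1 \<union> G2) N S lam X = objL G1 N S lam X + objL G2 N S lam X"
proof -
  let ?fit = "\<lambda>G i. tr_prod_on G (X i) (S i) - ln (det_on G (X i))"
  let ?E = "\<lambda>G. {(u, v). u \<in> G \<and> v \<in> G \<and> u \<noteq> v}"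
  let ?pen = "\<lambda>(u, v). sqrt (\<Sum>i\<in>N. (X i u v)\<^sup>2)"
  have fit: "?fit (G1 \<union> G2) i = ?fit G1 i + ?fit G2 i" if "i \<in> N" for i
  proof -
    have "det_on G1 (X i) > 0" "det_on G2 (X i) > 0"
      using assms(1,2,4) that by (simp_all add: pd_on_det_on_pos)
    moreover have "det_on (G1 \<union> G2) (X i) = det_on G1 (X i) * det_on G2 (X i)"
      using assms that by (simp add: det_on_block_diag)
    moreover have "tr_prod_on (G1 \<union> G2) (X i) (S i) =
        tr_prod_on G1 (X i) (S i) + tr_prod_on G2 (X i) (S i)"
      using assms that by (simp add: tr_prod_on_block_diag)
    ultimately show ?thesis by (simp add: ln_mult_pos)
  qed
  have fin: "finite (?E (G1 \<union> G2))"
    by (rule finite_subset[of _ "(G1 \<union> G2) \<times> (G1 \<union> G2)"]) (use assms(1,2) in auto)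
  have "?pen p = 0" if "p \<in> ?E (G1 \<union> G2) - (?E G1 \<union> ?E G2)" for p
    using that assms(4) by (auto simp: block_diag_def)
  then have "sum ?pen (?E (G1 \<union> G2)) = sum ?pen (?E G1 \<union> ?E G2)"
    using fin by (intro sum.mono_neutral_right) auto
  also have "\<dots> = sum ?pen (?E G1) + sum ?pen (?E G2)"
    using assms(3) by (intro sum.union_disjoint finite_subset[OF _ fin]) auto
  finally have pen: "sum ?pen (?E (G1 \<union> G2)) = sum ?pen (?E G1) + sum ?pen (?E G2)" .
  have "(\<Sum>i\<in>N. ?fit (G1 \<union> G2) i) = (\<Sum>i\<in>N. ?fit G1 i) + (\<Sum>i\<in>N. ?fit G2 i)"
    using fit by (simp add: sum.distrib[symmetric])
  then show ?thesis
    unfolding objL_def pen by (simp add: algebra_simps)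
qed

lemma is_minimizer_block_diag:
  assumes "finite G1" "finite G2" "G1 \<inter> G2 = {}"
    and "is_minimizer (G1 \<union> G2) N S lam \<Omega>" "\<forall>i\<in>N. block_diag G1 G2 (\<Omega> i)"
  shows "is_minimizer G1 N S lam \<Omega>"
proof -
  have pd: "pd_on G1 (\<Omega> i)" "pd_on G2 (\<Omega> i)" if "i \<in> N" for i
    using assms(1,2,4) that pd_on_subset[of "G1 \<union> G2"]
    unfolding is_minimizer_def feasible_def by blast+
  have "objL G1 N S lam \<Omega> \<le> objL G1 N S lam \<Omega>'" if "feasible G1 N \<Omega>'" for \<Omega>'
  proof -
    define W where "W i = glue_blocks G1 (\<Omega>' i) G2 (\<Omega> i)" for i
    have W1: "\<forall>i\<in>N. \<forall>u\<in>G1. \<forall>v\<in>G1. W i u v = \<Omega>' i u v"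
      by (simp add: W_def glue_blocks_left)
    have W2: "\<forall>i\<in>N. \<forall>u\<in>G2. \<forall>v\<in>G2. W i u v = \<Omega> i u v"
      using assms(3) by (simp add: W_def glue_blocks_right)
    have "block_diag G1 G2 (W i) \<and> pd_on G1 (W i) \<and> pd_on G2 (W i)" if "i \<in> N" for i
      using \<open>feasible G1 N \<Omega>'\<close> pd[OF that] W1 W2 that assms(3)
        pd_on_cong[of G1 "W i" "\<Omega>' i"] pd_on_cong[of G2 "W i" "\<Omega> i"]
      by (simp add: W_def feasible_def block_diag_glue_blocks)
    then have W: "\<forall>i\<in>N. block_diag G1 G2 (W i) \<and> pd_on G1 (W i) \<and> pd_on G2 (W i)" ..
    then have "feasible (G1 \<union> G2) N W"
      unfolding feasible_def using assms(1-3) by (blast intro: pd_on_block_diag)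
    then have "objL (G1 \<union> G2) N S lam \<Omega> \<le> objL (G1 \<union> G2) N S lam W"
      using assms(4) unfolding is_minimizer_def by blast
    moreover have "objL (G1 \<union> G2) N S lam \<Omega> = objL G1 N S lam \<Omega> + objL G2 N S lam \<Omega>"
      using assms(1-3,5) pd by (intro objL_block_diag) auto
    moreover have "objL (G1 \<union> G2) N S lam W = objL G1 N S lam \<Omega>' + objL G2 N S lam \<Omega>"
      using objL_block_diag[OF assms(1-3) W] objL_cong[OF W1] objL_cong[OF W2] by simp
    ultimately show ?thesis by simp
  qed
  with pd show ?thesis unfolding is_minimizer_def feasible_def by blast
qed

theorem theorem1:
  fixes p :: nat and N :: "'i set" and S \<Omega> :: "'i \<Rightarrow> nat \<Rightarrow> nat \<Rightarrow> real"
    and lam :: real and G1 G2 :: "nat set"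
  assumes "p \<ge> 2"
    and "finite N" and "N \<noteq> {}"
    and "\<forall>i\<in>N. psd_on {0..<p} (S i)"
    and "lam > 0"
    and "G1 \<union> G2 = {0..<p}" and "G1 \<inter> G2 = {}" and "G1 \<noteq> {}" and "G2 \<noteq> {}"
    and "is_minimizer {0..<p} N S lam \<Omega>"
    and "\<forall>i\<in>N. \<forall>u\<in>G1. \<forall>v\<in>G2. \<Omega> i u v = 0 \<and> \<Omega> i v u = 0"
  shows "is_minimizer G1 N S lam \<Omega> \<and> is_minimizer G2 N S lam \<Omega>"
proof
  have fin: "finite G1" "finite G2"
    using assms(6) by (metis finite_Un finite_atLeastLessThan)+
  have blk: "\<forall>i\<in>N. block_diag G1 G2 (\<Omega> i)"
    using assms(11) by (simp add: block_diag_def)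
  show "is_minimizer G1 N S lam \<Omega>"
    using is_minimizer_block_diag[OF fin assms(7)] assms(6,10) blk by simp
  show "is_minimizer G2 N S lam \<Omega>"
    using is_minimizer_block_diag[OF fin(2,1), of N S lam \<Omega>] assms(6,7,10) blk
    by (simp add: Un_commute Int_commute block_diag_commute)
qed

end
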